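(* Let $S$ be an infinite closed subgroup of $\mathrm{SO}(2)\times\mathrm{SO}(2)$. Then there exists a nonzero $\phi\in L^2(\mathcal P,\lambda,\mathbb{R})$ fixed by $S$ under the action $T'$ if and only if $S=H(N,q,p)$ for some odd integer $N\ge 1$ and some odd, relatively prime integers $q,p$, where $H(N,q,p)=\{(R(q\theta),R(p\theta+2\pi i/N)):\theta\in\mathbb{R},\ i\in\{0,\dots,N-1\}\}$. (These groups are the infinite potential little groups.)
   Context: $R(\theta)=\begin{pmatrix}\cos\theta & \sin\theta\\ -\sin\theta & \cos\theta\end{pmatrix}$. $\mathcal P=P_1(\mathbb{R})\times P_1(\mathbb{R})$ with $P_1(\mathbb{R})=\mathbb{R}\cup\{\infty\}$; angular coordinates $x=\cot(\rho/2)$, $y=\cot(\sigma/2)$; $\lambda$ is the $\mathrm{SO}(2)\times\mathrm{SO}(2)$-invariant measure $d\rho\,d\sigma$; $L^2(\mathcal P,\lambda,\mathbb{R})$ is the real Hilbert space of square-integrable real functions on $\mathcal P$. For $g=\begin{pmatrix}a&b\\c&d\end{pmatrix}\in\mathrm{SL}(2,\mathbb{R})$: $xg=\frac{xa+c}{xb+d}$, $k_g(x)=\left(\frac{(xb+d)^2+(xa+c)^2}{1+x^2}\right)^{1/2}$, $s_g(x)=\frac{xb+d}{|xb+d|}$, and $(T'(g,h)\phi)(x,y)=k_g^{-3}(x)s_g(x)k_h^{-3}(y)s_h(y)\phi(xg,yh)$. $\phi$ is fixed by $S$ if $T'(s)\phi=\phi$ in $L^2$ for all $s\in S$. *)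

theory Defs
  imports "HOL-Analysis.Analysis" "HOL-Probability.Probability"
begin

definition rot :: "real \<Rightarrow> real^2^2" where
  "rot \<theta> = vector [vector [cos \<theta>, sin \<theta>], vector [- sin \<theta>, cos \<theta>]]"

definition SO2 :: "(real^2^2) set" where
  "SO2 = range rot"

definition closed_subgroup_SO2xSO2 :: "((real^2^2) \<times> (real^2^2)) set \<Rightarrow> bool" where
  "closed_subgroup_SO2xSO2 S \<longleftrightarrow>
     S \<subseteq> SO2 \<times> SO2 \<and> (mat 1, mat 1) \<in> S \<and>
     (\<forall>g\<in>S. \<forall>h\<in>S. (fst g ** fst h, snd g ** snd h) \<in> S) \<and>
     (\<forall>g\<in>S. (matrix_inv (fst g), matrix_inv (snd g)) \<in> S) \<and>
     closed S"

definition H :: "nat \<Rightarrow> int \<Rightarrow> int \<Rightarrow> ((real^2^2) \<times> (real^2^2)) set" where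
  "H N q p = {(rot (of_int q * \<theta>), rot (of_int p * \<theta> + 2 * pi * real i / real N)) | \<theta> i. i < N}"

text \<open>For g = ((a,b),(c,d)): x g = (x a + c)/(x b + d), k_g, s_g.
  Points of P_1(R) are represented by the coordinate x = cot(rho/2) in R;
  the single point infinity is a null set for lambda.\<close>
definition mob :: "real^2^2 \<Rightarrow> real \<Rightarrow> real" where
  "mob g x = (x * g$1$1 + g$2$1) / (x * g$1$2 + g$2$2)"

definition kfac :: "real^2^2 \<Rightarrow> real \<Rightarrow> real" where
  "kfac g x = sqrt (((x * g$1$2 + g$2$2)^2 + (x * g$1$1 + g$2$1)^2) / (1 + x^2))"

definition sfac :: "real^2^2 \<Rightarrow> real \<Rightarrow> real" where
  "sfac g x = (x * g$1$2 + g$2$2) / \<bar>x * g$1$2 + g$2$2\<bar>"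

definition Tprime :: "(real^2^2) \<times> (real^2^2) \<Rightarrow> (real \<times> real \<Rightarrow> real) \<Rightarrow> real \<times> real \<Rightarrow> real" where
  "Tprime gh \<phi> xy =
     inverse (kfac (fst gh) (fst xy) ^ 3) * sfac (fst gh) (fst xy) *
     inverse (kfac (snd gh) (snd xy) ^ 3) * sfac (snd gh) (snd xy) *
     \<phi> (mob (fst gh) (fst xy), mob (snd gh) (snd xy))"

text \<open>The invariant measure d rho d sigma, written in the coordinates x = cot(rho/2),
  y = cot(sigma/2): d rho = 2/(1+x^2) dx.\<close>
definition lam :: "(real \<times> real) measure" where
  "lam = density (lborel \<Otimes>\<^sub>M lborel) (\<lambda>(x,y). ennreal (4 / ((1 + x^2) * (1 + y^2))))"

definition L2 :: "(real \<times> real \<Rightarrow> real) \<Rightarrow> bool" where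
  "L2 \<phi> \<longleftrightarrow> \<phi> \<in> borel_measurable lam \<and> integrable lam (\<lambda>z. (\<phi> z)^2)"

end

theory Submission
  imports Defs
begin

text \<open>
  Pull \<open>S\<close> back along \<open>(a, b) \<mapsto> (R(a), R(b))\<close> to its angle group \<open>G\<close>, a closed
  subgroup of \<open>\<real>\<^sup>2\<close> containing \<open>2\<pi>\<int>\<^sup>2\<close>. If \<open>S\<close> is infinite, \<open>G\<close> has arbitrarily small
  nonzero elements, hence contains a line, hence \<open>G = {(a, b). m a + n b \<in> 2\<pi>\<int>}\<close> for some
  integers \<open>m, n\<close>. In angular coordinates, \<open>Re (exp (\<i> (m \<rho> + n \<sigma>) / 2))\<close> is multiplied by
  \<open>exp (\<i> (m a + n b))\<close> under \<open>(R(a), R(b))\<close> up to signs, and these cancel against \<open>s\<^sub>g\<close>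
  when \<open>m\<close> and \<open>n\<close> are odd; so for odd \<open>m, n\<close> it is a nonzero fixed vector. Conversely
  \<open>(R(\<pi>), 1)\<close> and \<open>(1, R(\<pi>))\<close> act by \<open>-1\<close>, so a nonzero fixed vector forces
  \<open>(\<pi>, 0), (0, \<pi>) \<notin> G\<close>, i.e. \<open>m\<close> and \<open>n\<close> odd. The images of these kernels are exactly
  the groups \<open>H(N, q, p)\<close>.
\<close>

lemma rot_nth [simp]:
  "rot t $ 1 $ 1 = cos t" "rot t $ 1 $ 2 = sin t" "rot t $ 2 $ 1 = - sin t" "rot t $ 2 $ 2 = cos t"
  by (simp_all add: rot_def)

lemma mat2_eq_iff:
  "(A::'a^2^2) = B \<longleftrightarrow> A$1$1 = B$1$1 \<and> A$1$2 = B$1$2 \<and> A$2$1 = B$2$1 \<and> A$2$2 = B$2$2"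
  by (auto simp: vec_eq_iff forall_2)

lemma rot_add: "rot a ** rot b = rot (a + b)"
  by (simp add: mat2_eq_iff matrix_matrix_mult_def sum_2 cos_add sin_add algebra_simps)

lemma rot_0: "rot 0 = mat 1"
  by (simp add: mat2_eq_iff mat_def)

lemma matrix_inv_rot: "matrix_inv (rot a) = rot (- a)"
proof -
  have "\<exists>A'. rot a ** A' = mat 1 \<and> A' ** rot a = mat 1"
    by (rule exI[of _ "rot (- a)"]) (simp add: rot_add rot_0)
  then have right_inv: "rot a ** matrix_inv (rot a) = mat 1"
    unfolding matrix_inv_def by (rule someI2_ex) blast
  have "rot (- a) = rot (- a) ** (rot a ** matrix_inv (rot a))"
    by (simp add: right_inv)
  also have "\<dots> = matrix_inv (rot a)"
    by (simp add: matrix_mul_assoc rot_add rot_0)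
  finally show ?thesis by simp
qed

lemma rot_eq_iff: "rot a = rot b \<longleftrightarrow> (\<exists>k::int. a - b = 2 * pi * k)"
proof
  assume "rot a = rot b"
  then have "cos a = cos b" "sin a = sin b" by (metis rot_nth(1), metis rot_nth(2))
  then have "cos (a - b) = 1" by (simp add: cos_diff power2_eq_square[symmetric])
  then show "\<exists>k::int. a - b = 2 * pi * k" using cos_one_2pi_int by (auto simp: algebra_simps)
next
  assume "\<exists>k::int. a - b = 2 * pi * k"
  then obtain k :: int where "a = b + 2 * pi * k" by (auto simp: algebra_simps)
  then show "rot a = rot b" by (simp add: rot_def cos_add sin_add mult.assoc[symmetric])
qed

lemma rot_reduce:
  obtains a' where "a' \<in> {0..2 * pi}" "rot a' = rot a"
proof
  let ?a' = "a - of_int \<lfloor>a / (2 * pi)\<rfloor> * (2 * pi)"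
  have "of_int \<lfloor>a / (2 * pi)\<rfloor> * (2 * pi) \<le> a" "a < (of_int \<lfloor>a / (2 * pi)\<rfloor> + 1) * (2 * pi)"
    by (simp_all only: floor_divide_lower floor_divide_upper pi_gt_zero zero_less_mult_iff zero_less_numeral simp_thms)
  then show "?a' \<in> {0..2 * pi}"
    by (simp add: algebra_simps)
  show "rot ?a' = rot a"
    unfolding rot_eq_iff by (rule exI[of _ "- \<lfloor>a / (2 * pi)\<rfloor>"]) simp
qed

lemma continuous_on_rot: "continuous_on UNIV rot"
proof -
  have "rot = (\<lambda>t. \<chi> i j. cos t * rot 0 $ i $ j + sin t * rot (pi / 2) $ i $ j)"
    by (simp add: fun_eq_iff mat2_eq_iff)
  then show ?thesis
    by (subst \<open>rot = _\<close>) (intro continuous_on_vec_lambda continuous_intros)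
qed

lemma one_plus_square_pos: "0 < 1 + (x::real)\<^sup>2"
  by (simp add: add_pos_nonneg)

definition rot_denom :: "real \<Rightarrow> real \<Rightarrow> real" where
  "rot_denom t x = x * sin t + cos t"

lemma rot_denom_sq_add: "(rot_denom t x)\<^sup>2 + (x * cos t - sin t)\<^sup>2 = 1 + x\<^sup>2"
proof -
  have "(x * sin t + cos t)\<^sup>2 + (x * cos t - sin t)\<^sup>2 = (1 + x\<^sup>2) * ((sin t)\<^sup>2 + (cos t)\<^sup>2)"
    by algebra
  then show ?thesis by (simp add: rot_denom_def)
qed

lemma kfac_rot: "kfac (rot t) x = 1"
  using rot_denom_sq_add[of t x] one_plus_square_pos[of x]
  by (simp add: kfac_def rot_denom_def)

lemma sfac_rot: "sfac (rot t) x = sgn (rot_denom t x)"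
  by (simp add: sfac_def rot_denom_def real_sgn_eq)

lemma mob_rot: "mob (rot t) x = (x * cos t - sin t) / rot_denom t x"
  by (simp add: mob_def rot_denom_def)

lemma Tprime_rot_pair:
  "Tprime (rot a, rot b) \<phi> (x, y) =
     sgn (rot_denom a x) * sgn (rot_denom b y) * \<phi> (mob (rot a) x, mob (rot b) y)"
  by (simp add: Tprime_def kfac_rot sfac_rot)

lemma Tprime_rot_pi_0: "Tprime (rot pi, rot 0) \<phi> z = - \<phi> z"
  by (cases z) (simp add: Tprime_rot_pair rot_denom_def mob_rot)

lemma Tprime_rot_0_pi: "Tprime (rot 0, rot pi) \<phi> z = - \<phi> z"
  by (cases z) (simp add: Tprime_rot_pair rot_denom_def mob_rot)

section \<open>Functions transforming by a character\<close>

text \<open>\<open>half_cis (cot (\<rho> / 2)) = cis (\<rho> / 2)\<close> for \<open>0 < \<rho> < 2\<pi>\<close>, so \<open>char_fun m n\<close> below is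
  \<open>Re (exp (\<i> (m \<rho> + n \<sigma>) / 2))\<close> in angular coordinates.\<close>

definition half_cis :: "real \<Rightarrow> complex" where
  "half_cis x = (of_real x + \<i>) / of_real (sqrt (1 + x\<^sup>2))"

lemma norm_half_cis [simp]: "norm (half_cis x) = 1"
proof -
  have "norm (of_real x + \<i>) = sqrt (1 + x\<^sup>2)"
    by (simp add: cmod_def add.commute)
  then show ?thesis
    using one_plus_square_pos[of x] by (simp add: half_cis_def norm_divide)
qed

lemma continuous_on_half_cis: "continuous_on UNIV half_cis"
  unfolding half_cis_def[abs_def] using one_plus_square_pos
  by (intro continuous_intros) (auto simp: order.strict_iff_order)

lemma half_cis_mob_rot:
  assumes D: "rot_denom t x \<noteq> 0"
  shows "half_cis (mob (rot t) x) = half_cis x * cis t * of_real (sgn (rot_denom t x))"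
proof -
  let ?D = "rot_denom t x" and ?m = "mob (rot t) x"
  have "1 + ?m\<^sup>2 = (1 + x\<^sup>2) / ?D\<^sup>2"
    using D rot_denom_sq_add[of t x] by (simp add: mob_rot field_simps power_divide)
  then have sqrt_eq: "sqrt (1 + ?m\<^sup>2) = sqrt (1 + x\<^sup>2) / \<bar>?D\<bar>"
    by (simp add: real_sqrt_divide)
  have num_eq: "of_real ?m + \<i> = (of_real x + \<i>) * cis t / of_real ?D"
    using D by (simp add: mob_rot complex_eq_iff field_simps rot_denom_def)
  show ?thesis
    using D one_plus_square_pos[of x]
    unfolding half_cis_def sqrt_eq num_eq by (simp add: field_simps sgn_if)
qed

definition char_kernel :: "int \<Rightarrow> int \<Rightarrow> (real \<times> real) set" where
  "char_kernel m n = {(a, b). \<exists>k::int. of_int m * a + of_int n * b = 2 * pi * of_int k}"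

lemma of_int_mult_pi_eq_iff: "of_int m * pi = 2 * pi * of_int k \<longleftrightarrow> m = 2 * k"
proof -
  have "of_int m * pi = 2 * pi * of_int k \<longleftrightarrow> of_int m * pi = of_int (2 * k) * pi"
    by (simp add: ac_simps)
  also have "\<dots> \<longleftrightarrow> m = 2 * k"
    by (simp only: mult_cancel_right pi_neq_zero of_int_eq_iff simp_thms)
  finally show ?thesis .
qed

lemma pi_zero_mem_char_kernel_iff: "(pi, 0) \<in> char_kernel m n \<longleftrightarrow> even m"
  by (auto simp: char_kernel_def of_int_mult_pi_eq_iff)

lemma zero_pi_mem_char_kernel_iff: "(0, pi) \<in> char_kernel m n \<longleftrightarrow> even n"
  by (auto simp: char_kernel_def of_int_mult_pi_eq_iff)

definition char_fun :: "int \<Rightarrow> int \<Rightarrow> real \<times> real \<Rightarrow> real" where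
  "char_fun m n z = Re (half_cis (fst z) powi m * half_cis (snd z) powi n)"

lemma continuous_on_char_fun: "continuous_on UNIV (char_fun m n)"
proof -
  have "continuous_on UNIV (\<lambda>z::real \<times> real. half_cis (fst z))"
    "continuous_on UNIV (\<lambda>z::real \<times> real. half_cis (snd z))"
    by (auto intro!: continuous_on_compose2[OF continuous_on_half_cis] continuous_intros)
  moreover have "half_cis x \<noteq> 0" for x
    by (metis norm_half_cis norm_zero zero_neq_one)
  ultimately show ?thesis
    unfolding char_fun_def[abs_def] by (intro continuous_intros) auto
qed

lemma abs_char_fun_le: "\<bar>char_fun m n z\<bar> \<le> 1"
proof -
  have "\<bar>char_fun m n z\<bar> \<le> norm (half_cis (fst z) powi m * half_cis (snd z) powi n)"
    unfolding char_fun_def by (rule abs_Re_le_cmod)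
  also have "\<dots> = 1"
    by (simp add: norm_mult norm_power_int)
  finally show ?thesis .
qed

lemma char_fun_0_0:
  assumes "odd m" "odd n"
  shows "char_fun m n (0, 0) \<noteq> 0"
proof -
  obtain k where k: "m + n = 2 * k"
    using assms by (metis odd_add evenE)
  have "half_cis 0 = \<i>"
    by (simp add: half_cis_def)
  then have "char_fun m n (0, 0) = Re ((-1) powi k)"
    by (simp add: char_fun_def power_int_add[symmetric] power_int_mult k)
  then show ?thesis
    by (simp add: power_int_minus_left)
qed

lemma sgn_powi_odd: "odd k \<Longrightarrow> s \<noteq> 0 \<Longrightarrow> of_real (sgn (s::real)) powi k = (of_real (sgn s) :: complex)"
  by (cases "s > 0") (simp_all add: sgn_if)

text \<open>The signs picked up by \<open>half_cis\<close> under \<open>mob\<close> cancel the factors \<open>sfac\<close> because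
  \<open>m\<close> and \<open>n\<close> are odd.\<close>
lemma Tprime_char_fun:
  assumes "odd m" "odd n" "(a, b) \<in> char_kernel m n"
    and Dx: "rot_denom a x \<noteq> 0" and Dy: "rot_denom b y \<noteq> 0"
  shows "Tprime (rot a, rot b) (char_fun m n) (x, y) = char_fun m n (x, y)"
proof -
  let ?sx = "sgn (rot_denom a x)" and ?sy = "sgn (rot_denom b y)"
  have character: "cis a powi m * cis b powi n = 1"
    using assms(3) by (auto simp: char_kernel_def cis_power_int cis_mult)
  have "half_cis (mob (rot a) x) powi m * half_cis (mob (rot b) y) powi n
      = (half_cis x powi m * half_cis y powi n) * (cis a powi m * cis b powi n) * of_real (?sx * ?sy)"
    using Dx Dy assms(1,2)
    by (simp add: half_cis_mob_rot power_int_mult_distrib sgn_powi_odd del: of_real_mult)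
      (simp add: ac_simps)
  then have "char_fun m n (mob (rot a) x, mob (rot b) y) = ?sx * ?sy * char_fun m n (x, y)"
    by (simp add: char_fun_def character mult.commute)
  then show ?thesis
    using Dx Dy by (simp add: Tprime_rot_pair) (auto simp: sgn_if)
qed

lemma AE_lam_iff: "(AE z in lam. P z) \<longleftrightarrow> (AE z in lborel. P z)"
proof -
  have "(AE z in lam. P z) \<longleftrightarrow> (AE z in lborel \<Otimes>\<^sub>M lborel. P z)"
    unfolding lam_def by (subst AE_density) (auto simp: one_plus_square_pos)
  then show ?thesis unfolding lborel_prod .
qed

lemma measurable_lam_iff: "f \<in> borel_measurable lam \<longleftrightarrow> f \<in> borel_measurable lborel"
  by (simp add: lam_def lborel_prod cong: measurable_cong_sets)

lemma finite_measure_arc_density: "finite_measure (density lborel (\<lambda>x::real. ennreal (2 / (1 + x\<^sup>2))))"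
proof
  have "integrable lborel (\<lambda>x::real. inverse (1 + x\<^sup>2))"
    using integrable_inverse_1_plus_square by (simp add: set_integrable_def einterval_iff)
  then have "integrable lborel (\<lambda>x::real. 2 / (1 + x\<^sup>2))"
    by (simp add: divide_inverse)
  then have "(\<integral>\<^sup>+x. ennreal (2 / (1 + x\<^sup>2)) \<partial>lborel) < \<infinity>"
    using one_plus_square_pos by (simp add: integrable_iff_bounded abs_of_pos)
  then show "emeasure (density lborel (\<lambda>x::real. ennreal (2 / (1 + x\<^sup>2))))
      (space (density lborel (\<lambda>x::real. ennreal (2 / (1 + x\<^sup>2))))) \<noteq> \<infinity>"
    by (simp add: emeasure_density)
qed

lemma finite_measure_lam: "finite_measure lam"
proof -
  let ?M = "density lborel (\<lambda>x::real. ennreal (2 / (1 + x\<^sup>2)))"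
  have "lam = ?M \<Otimes>\<^sub>M ?M"
    using one_plus_square_pos
    by (simp add: lam_def pair_measure_density finite_measure_arc_density finite_measure.sigma_finite_measure
        lborel.sigma_finite_measure_axioms case_prod_unfold ennreal_mult'[symmetric] field_simps)
  then show ?thesis
    by (metis finite_measure_pair_measure finite_measure_arc_density)
qed

lemma L2_if_continuous_bounded:
  assumes "continuous_on UNIV \<phi>" and "\<And>z. \<bar>\<phi> z\<bar> \<le> B"
  shows "L2 \<phi>"
proof -
  interpret finite_measure lam by (rule finite_measure_lam)
  have "\<phi> \<in> borel_measurable lborel"
    using assms(1) by (simp add: borel_measurable_continuous_onI)
  then have [measurable]: "\<phi> \<in> borel_measurable lam"
    by (simp add: measurable_lam_iff)
  have "\<bar>\<phi> z\<bar>\<^sup>2 \<le> B\<^sup>2" for z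
    using assms(2)[of z] by (intro power_mono) auto
  then have "integrable lam (\<lambda>z. (\<phi> z)\<^sup>2)"
    by (intro integrable_const_bound[where B = "B\<^sup>2"]) auto
  then show ?thesis by (simp add: L2_def)
qed

lemma not_AE_zero_if_continuous:
  fixes f :: "'a::euclidean_space \<Rightarrow> 'b::real_normed_vector"
  assumes "continuous_on UNIV f" and "f z \<noteq> 0"
  shows "\<not> (AE x in lborel. f x = 0)"
proof
  let ?U = "{x. f x \<noteq> 0}"
  assume "AE x in lborel. f x = 0"
  moreover have "open ?U"
    using assms(1) by (rule open_Collect_neq[OF _ continuous_on_const])
  ultimately have "?U \<in> null_sets lborel"
    by (simp add: AE_iff_null_sets borel_open)
  then have "negligible ?U"
    using negligible_iff_null_sets null_sets_completionI by blast
  with \<open>open ?U\<close> show False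
    using open_not_negligible assms(2) by blast
qed

lemma AE_rot_denom_nonzero: "AE z in lam. rot_denom a (fst z) \<noteq> 0 \<and> rot_denom b (snd z) \<noteq> 0"
proof -
  have root: "x = - cos t / sin t" if "rot_denom t x = 0" for t x
  proof -
    have "sin t \<noteq> 0"
    proof
      assume "sin t = 0"
      with that have "cos t = 0" by (simp add: rot_denom_def)
      with \<open>sin t = 0\<close> show False using sin_cos_squared_add[of t] by simp
    qed
    then show ?thesis
      using that by (simp add: rot_denom_def field_simps)
  qed
  let ?N = "{- cos a / sin a} \<times> UNIV \<union> UNIV \<times> {- cos b / sin b} :: (real \<times> real) set"
  have "?N \<in> null_sets (lborel \<Otimes>\<^sub>M lborel)"
    by (intro null_sets.Un lborel.times_in_null_sets1 lborel.times_in_null_sets2) auto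
  then have "?N \<in> null_sets lborel"
    unfolding lborel_prod .
  then have "AE z in lborel. rot_denom a (fst z) \<noteq> 0 \<and> rot_denom b (snd z) \<noteq> 0"
    by (rule AE_I') (auto dest: root)
  then show ?thesis
    by (simp add: AE_lam_iff)
qed

lemma L2_char_fun: "L2 (char_fun m n)"
  by (rule L2_if_continuous_bounded[OF continuous_on_char_fun abs_char_fun_le])

lemma char_fun_not_AE_zero:
  assumes "odd m" "odd n"
  shows "\<not> (AE z in lam. char_fun m n z = 0)"
  using not_AE_zero_if_continuous[OF continuous_on_char_fun char_fun_0_0[OF assms]]
  by (simp add: AE_lam_iff)

lemma char_fun_fixed:
  assumes "odd m" "odd n" "(a, b) \<in> char_kernel m n"
  shows "AE z in lam. Tprime (rot a, rot b) (char_fun m n) z = char_fun m n z"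
  using AE_rot_denom_nonzero[of a b]
  by eventually_elim (auto intro: Tprime_char_fun[OF assms])

section \<open>Closed subgroups of the line and the plane\<close>

definition add_subgroup :: "'a::ab_group_add set \<Rightarrow> bool" where
  "add_subgroup G \<longleftrightarrow> 0 \<in> G \<and> (\<forall>x\<in>G. \<forall>y\<in>G. x + y \<in> G) \<and> (\<forall>x\<in>G. - x \<in> G)"

lemma add_subgroup_diff: "add_subgroup G \<Longrightarrow> x \<in> G \<Longrightarrow> y \<in> G \<Longrightarrow> x - y \<in> G"
  unfolding add_subgroup_def by (simp only: diff_conv_add_uminus)

lemma add_subgroup_of_int_scaleR:
  fixes x :: "'a::real_vector"
  assumes "add_subgroup G" "x \<in> G"
  shows "of_int k *\<^sub>R x \<in> G"
proof (induction k rule: int_induct[where k = 0])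
  case base
  then show ?case using assms(1) by (simp add: add_subgroup_def)
next
  case (step1 i)
  then show ?case using assms by (simp add: add_subgroup_def scaleR_add_left)
next
  case (step2 i)
  then show ?case using assms add_subgroup_diff[OF assms(1)] by (simp add: scaleR_diff_left)
qed

lemma add_subgroup_small_elements:
  fixes G :: "'a::{real_normed_vector, heine_borel} set"
  assumes "add_subgroup G" "T \<subseteq> G" "bounded T" "infinite T" "e > 0"
  shows "\<exists>g\<in>G. g \<noteq> 0 \<and> norm g < e"
proof -
  obtain x where "x islimpt T"
    using bounded_infinite_imp_islimpt[OF subset_refl assms(3,4)] by blast
  then have U: "infinite (T \<inter> ball x (e / 2))"
    using assms(5) by (simp add: islimpt_eq_infinite_ball)
  then obtain y where y: "y \<in> T \<inter> ball x (e / 2)"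
    using infinite_imp_nonempty by blast
  have "infinite (T \<inter> ball x (e / 2) - {y})"
    using U by simp
  then obtain z where "z \<in> T \<inter> ball x (e / 2) - {y}"
    using infinite_imp_nonempty by blast
  with y have yz: "y \<in> T \<inter> ball x (e / 2)" "z \<in> T \<inter> ball x (e / 2)" "y \<noteq> z"
    by auto
  have "norm (y - z) < e"
    using yz(1,2) dist_triangle_half_r[of x y e z] by (simp add: dist_norm dist_commute)
  moreover have "y - z \<in> G"
    using yz assms(1,2) by (auto intro: add_subgroup_diff)
  ultimately show ?thesis
    using yz(3) by (intro bexI[of _ "y - z"]) auto
qed

lemma floor_divide_mult_tendsto:
  fixes c :: "nat \<Rightarrow> real"
  assumes "\<And>n. c n > 0" "c \<longlonglongrightarrow> 0"
  shows "(\<lambda>n. of_int \<lfloor>t / c n\<rfloor> * c n) \<longlonglongrightarrow> t"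
proof -
  have "norm (of_int \<lfloor>t / c n\<rfloor> * c n - t) \<le> c n" for n
    using floor_divide_lower[OF assms(1), of t n] floor_divide_upper[OF assms(1), of t n]
    by (simp add: algebra_simps)
  then have "(\<lambda>n. of_int \<lfloor>t / c n\<rfloor> * c n - t) \<longlonglongrightarrow> 0"
    by (intro Lim_null_comparison[OF always_eventually assms(2)]) auto
  then show ?thesis
    by (simp add: LIM_zero_iff)
qed

lemma closed_add_subgroup_contains_line:
  fixes G :: "'a::{real_normed_vector, perfect_space, heine_borel} set"
  assumes sg: "add_subgroup G" and cl: "closed G"
    and small: "\<And>e. e > 0 \<Longrightarrow> \<exists>g\<in>G. g \<noteq> 0 \<and> norm g < e"
  shows "\<exists>v. norm v = 1 \<and> (\<forall>t. t *\<^sub>R v \<in> G)"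
proof -
  have "\<forall>n. \<exists>g\<in>G. g \<noteq> 0 \<and> norm g < inverse (real (Suc n))"
    using small by simp
  then obtain g where g: "\<And>n. g n \<in> G" "\<And>n. g n \<noteq> 0" "\<And>n. norm (g n) < inverse (real (Suc n))"
    by metis
  have "\<forall>n. sgn (g n) \<in> sphere 0 1"
    using g(2) by (simp add: norm_sgn)
  then obtain v r where v: "v \<in> sphere 0 1" "strict_mono r" "((\<lambda>n. sgn (g n)) \<circ> r) \<longlonglongrightarrow> v"
    by (rule seq_compactE[OF compact_imp_seq_compact[OF compact_sphere]])
  define c where "c n = norm (g (r n))" for n
  have c_pos: "c n > 0" for n
    using g(2) by (simp add: c_def)
  have c_le: "c n \<le> inverse (real (Suc n))" for n
  proof -
    have "inverse (real (Suc (r n))) \<le> inverse (real (Suc n))"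
      using seq_suble[OF v(2), of n] by (simp add: le_imp_inverse_le)
    then show ?thesis
      using g(3)[of "r n"] unfolding c_def by linarith
  qed
  have "c \<longlonglongrightarrow> 0"
    using c_pos c_le
    by (intro Lim_null_comparison[OF always_eventually LIMSEQ_inverse_real_of_nat]) (auto simp: abs_of_pos)
  have "t *\<^sub>R v \<in> G" for t
  proof (rule closed_sequentially[OF cl])
    have "(of_int \<lfloor>t / c n\<rfloor> * c n) *\<^sub>R sgn (g (r n)) = of_int \<lfloor>t / c n\<rfloor> *\<^sub>R g (r n)" for n
      using c_pos[of n] by (simp add: c_def sgn_div_norm)
    then show "(\<lambda>n. of_int \<lfloor>t / c n\<rfloor> *\<^sub>R g (r n)) \<longlonglongrightarrow> t *\<^sub>R v"
      using tendsto_scaleR[OF floor_divide_mult_tendsto[OF c_pos \<open>c \<longlonglongrightarrow> 0\<close>, of t] v(3)]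
      by (simp add: comp_def)
  qed (use add_subgroup_of_int_scaleR[OF sg g(1)] in blast)
  with v(1) show ?thesis by auto
qed

lemma closed_add_subgroup_real_eq_multiples:
  fixes B :: "real set"
  assumes sg: "add_subgroup B" and cl: "closed B" and "b \<in> B" "b \<noteq> 0" and "B \<noteq> UNIV"
  shows "\<exists>c>0. B = range (\<lambda>k. of_int k * c)"
proof -
  define P where "P = {s\<in>B. s > 0}"
  have "\<bar>b\<bar> \<in> P"
    using assms(3,4) sg by (cases "b \<ge> 0") (auto simp: P_def add_subgroup_def)
  then have P_ne: "P \<noteq> {}" by blast
  have P_bdd: "bdd_below P"
    by (rule bdd_belowI[of _ 0]) (auto simp: P_def)
  define c where "c = Inf P"
  have "c \<in> closure P"
    unfolding c_def by (rule closure_contains_Inf[OF P_ne P_bdd])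
  also have "\<dots> \<subseteq> B"
    using cl by (metis P_def closure_minimal mem_Collect_eq subsetI)
  finally have c_mem: "c \<in> B" .
  have "c > 0"
  proof (rule ccontr)
    assume "\<not> c > 0"
    then have "c \<le> 0" by simp
    have "\<exists>s\<in>B. s \<noteq> 0 \<and> norm s < e" if "e > 0" for e
    proof -
      have "Inf P < e"
        using \<open>c \<le> 0\<close> that by (simp add: c_def)
      then obtain s where "s \<in> P" "s < e"
        using cInf_less_iff[OF P_ne P_bdd] by blast
      then show ?thesis by (intro bexI[of _ s]) (auto simp: P_def)
    qed
    then obtain v where v: "norm v = 1" "\<And>t. t *\<^sub>R v \<in> B"
      using closed_add_subgroup_contains_line[OF sg cl] by blast
    have "y \<in> B" for y
      using v(2)[of "y / v"] v(1) by (auto simp: abs_if split: if_splits)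
    with \<open>B \<noteq> UNIV\<close> show False by blast
  qed
  have "s \<in> range (\<lambda>k. of_int k * c)" if "s \<in> B" for s
  proof -
    define r where "r = s - of_int \<lfloor>s / c\<rfloor> * c"
    have "r \<in> B"
      unfolding r_def using add_subgroup_diff[OF sg that add_subgroup_of_int_scaleR[OF sg c_mem]] by simp
    moreover have "0 \<le> r" "r < c"
      using floor_divide_lower[OF \<open>c > 0\<close>, of s] floor_divide_upper[OF \<open>c > 0\<close>, of s]
      by (simp_all add: r_def algebra_simps)
    ultimately have "r = 0"
      using cInf_lower[OF _ P_bdd, of r] by (force simp: P_def c_def)
    then show ?thesis by (auto simp: r_def)
  qed
  moreover have "of_int k * c \<in> B" for k
    using add_subgroup_of_int_scaleR[OF sg c_mem] by simp
  ultimately show ?thesis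
    using \<open>c > 0\<close> by blast
qed

text \<open>Only the component of \<open>x\<close> along the normal \<open>(- v2, v1)\<close> of the line matters.\<close>
lemma add_subgroup_containing_line_mem_iff:
  fixes G :: "(real \<times> real) set"
  assumes sg: "add_subgroup G" and line: "\<And>t. t *\<^sub>R (v1, v2) \<in> G" and unit: "v1\<^sup>2 + v2\<^sup>2 = 1"
  shows "x \<in> G \<longleftrightarrow> (snd x * v1 - fst x * v2) *\<^sub>R (- v2, v1) \<in> G"
proof -
  let ?w = "(snd x * v1 - fst x * v2) *\<^sub>R (- v2, v1)"
  have "x = (fst x * v1 + snd x * v2) *\<^sub>R (v1, v2) + ?w"
  proof -
    have "fst x = fst x * (v1\<^sup>2 + v2\<^sup>2)" "snd x = snd x * (v1\<^sup>2 + v2\<^sup>2)"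
      using unit by simp_all
    then show ?thesis
      by (simp add: prod_eq_iff power2_eq_square algebra_simps)
  qed
  then show ?thesis
    using line add_subgroup_diff[OF sg _ line] sg unfolding add_subgroup_def
    by (metis add_diff_cancel_left')
qed

lemma preimage_multiples_eq_char_kernel:
  assumes "c > 0" and k1: "- 2 * pi * v2 = of_int k1 * c" and k2: "2 * pi * v1 = of_int k2 * c"
  shows "{x. snd x * v1 - fst x * v2 \<in> range (\<lambda>k. of_int k * c)} = char_kernel k1 k2"
proof -
  have "snd x * v1 - fst x * v2 \<in> range (\<lambda>k. of_int k * c) \<longleftrightarrow> x \<in> char_kernel k1 k2" for x
  proof -
    obtain a b where x: "x = (a, b)" by fastforce
    have "2 * pi * (b * v1 - a * v2) = a * (- 2 * pi * v2) + b * (2 * pi * v1)"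
      by (simp add: algebra_simps)
    also have "\<dots> = (of_int k1 * a + of_int k2 * b) * c"
      by (simp only: k1 k2) (simp add: algebra_simps)
    finally have scaled: "2 * pi * (b * v1 - a * v2) = (of_int k1 * a + of_int k2 * b) * c" .
    have "b * v1 - a * v2 \<in> range (\<lambda>k. of_int k * c) \<longleftrightarrow>
        (\<exists>k::int. (of_int k1 * a + of_int k2 * b) * c = (2 * pi * of_int k) * c)"
      by (auto simp flip: scaled)
    also have "\<dots> \<longleftrightarrow> (a, b) \<in> char_kernel k1 k2"
      using \<open>c > 0\<close> by (simp add: char_kernel_def)
    finally show ?thesis by (simp add: x)
  qed
  then show ?thesis by blast
qed

lemma closed_plane_subgroup_eq_char_kernel:
  fixes G :: "(real \<times> real) set"
  assumes sg: "add_subgroup G" and cl: "closed G" and "G \<noteq> UNIV"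
    and lattice: "\<And>k l :: int. (2 * pi * of_int k, 2 * pi * of_int l) \<in> G"
    and small: "\<And>e. e > 0 \<Longrightarrow> \<exists>g\<in>G. g \<noteq> 0 \<and> norm g < e"
  shows "\<exists>m n. G = char_kernel m n"
proof -
  obtain v1 v2 where line: "\<And>t. t *\<^sub>R (v1, v2) \<in> G" and unit: "v1\<^sup>2 + v2\<^sup>2 = 1"
    using closed_add_subgroup_contains_line[OF sg cl small] by (auto simp: norm_Pair)
  define w where "w = (- v2, v1)"
  define B where "B = {s. s *\<^sub>R w \<in> G}"
  have G: "G = {x. snd x * v1 - fst x * v2 \<in> B}"
    using add_subgroup_containing_line_mem_iff[OF sg line unit] by (auto simp: B_def w_def)
  have "add_subgroup B"
    using sg unfolding add_subgroup_def B_def by (simp add: scaleR_add_left)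
  moreover have "closed B"
    unfolding B_def using continuous_closed_vimage[OF cl, of "\<lambda>s. s *\<^sub>R w"]
    by (simp add: vimage_def continuous_intros)
  moreover have "B \<noteq> UNIV"
    using \<open>G \<noteq> UNIV\<close> G by auto
  moreover have gen1: "- 2 * pi * v2 \<in> B" and gen2: "2 * pi * v1 \<in> B"
    using lattice[of 1 0] lattice[of 0 1] unfolding G by simp_all
  moreover obtain b where "b \<in> B" "b \<noteq> 0"
  proof (cases "v1 = 0")
    case True
    then have "v2 \<noteq> 0" using unit by auto
    then show ?thesis using that[OF gen1] by simp
  next
    case False
    then show ?thesis using that[OF gen2] by simp
  qed
  ultimately obtain c where "c > 0" and B: "B = range (\<lambda>k. of_int k * c)"
    using closed_add_subgroup_real_eq_multiples by blast
  obtain k1 k2 where "- 2 * pi * v2 = of_int k1 * c" and "2 * pi * v1 = of_int k2 * c"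
    using gen1 gen2 B by auto
  then have "G = char_kernel k1 k2"
    unfolding G B using preimage_multiples_eq_char_kernel[OF \<open>c > 0\<close>] by blast
  then show ?thesis by blast
qed

section \<open>The angle group of a subgroup of SO(2) x SO(2)\<close>

definition rot_pair :: "real \<times> real \<Rightarrow> (real^2^2) \<times> (real^2^2)" where
  "rot_pair z = (rot (fst z), rot (snd z))"

definition angle_group :: "((real^2^2) \<times> (real^2^2)) set \<Rightarrow> (real \<times> real) set" where
  "angle_group S = rot_pair -` S"

lemma image_angle_group:
  assumes "closed_subgroup_SO2xSO2 S"
  shows "rot_pair ` angle_group S = S"
proof -
  have "S \<subseteq> range rot_pair"
  proof
    fix s assume "s \<in> S"
    then have "s \<in> SO2 \<times> SO2"
      using assms unfolding closed_subgroup_SO2xSO2_def by blast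
    then obtain a b where "fst s = rot a" "snd s = rot b"
      unfolding SO2_def mem_Times_iff by blast
    then have "s = rot_pair (a, b)"
      by (simp add: rot_pair_def prod_eq_iff)
    then show "s \<in> range rot_pair" by blast
  qed
  then show ?thesis
    unfolding angle_group_def image_vimage_eq by blast
qed

lemma add_subgroup_angle_group:
  assumes "closed_subgroup_SO2xSO2 S"
  shows "add_subgroup (angle_group S)"
proof -
  from assms have one: "(mat 1, mat 1) \<in> S"
    and mult: "\<And>g h. g \<in> S \<Longrightarrow> h \<in> S \<Longrightarrow> (fst g ** fst h, snd g ** snd h) \<in> S"
    and inv: "\<And>g. g \<in> S \<Longrightarrow> (matrix_inv (fst g), matrix_inv (snd g)) \<in> S"
    unfolding closed_subgroup_SO2xSO2_def by auto
  show ?thesis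
    unfolding add_subgroup_def angle_group_def vimage_def
  proof (intro conjI ballI CollectI)
    show "rot_pair 0 \<in> S"
      using one by (simp add: rot_pair_def rot_0)
  next
    fix x y assume "x \<in> {x. rot_pair x \<in> S}" "y \<in> {x. rot_pair x \<in> S}"
    then show "rot_pair (x + y) \<in> S"
      using mult[of "rot_pair x" "rot_pair y"] by (simp add: rot_pair_def rot_add)
  next
    fix x assume "x \<in> {x. rot_pair x \<in> S}"
    then show "rot_pair (- x) \<in> S"
      using inv[of "rot_pair x"] by (simp add: rot_pair_def matrix_inv_rot)
  qed
qed

lemma closed_angle_group:
  assumes "closed_subgroup_SO2xSO2 S"
  shows "closed (angle_group S)"
proof -
  have "continuous_on UNIV rot_pair"
    unfolding rot_pair_def
    by (intro continuous_on_Pair continuous_on_compose2[OF continuous_on_rot] continuous_intros) auto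
  moreover have "closed S"
    using assms by (simp add: closed_subgroup_SO2xSO2_def)
  ultimately show ?thesis
    unfolding angle_group_def by (intro closed_vimage)
qed

lemma lattice_mem_angle_group:
  assumes "closed_subgroup_SO2xSO2 S"
  shows "(2 * pi * of_int k, 2 * pi * of_int l) \<in> angle_group S"
proof -
  have "rot (2 * pi * of_int j) = mat 1" for j :: int
    by (simp add: rot_0[symmetric] rot_eq_iff)
  then show ?thesis
    using assms by (simp add: angle_group_def rot_pair_def closed_subgroup_SO2xSO2_def)
qed

lemma angle_group_small_elements:
  assumes "closed_subgroup_SO2xSO2 S" "infinite S" "e > 0"
  shows "\<exists>g\<in>angle_group S. g \<noteq> 0 \<and> norm g < e"
proof (rule add_subgroup_small_elements[OF add_subgroup_angle_group[OF assms(1)] _ _ _ assms(3)])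
  let ?T = "angle_group S \<inter> cbox (0, 0) (2 * pi, 2 * pi)"
  have "S \<subseteq> rot_pair ` ?T"
  proof
    fix s assume "s \<in> S"
    then obtain z where z: "z \<in> angle_group S" "s = rot_pair z"
      using image_angle_group[OF assms(1)] by blast
    obtain a' where a': "a' \<in> {0..2 * pi}" "rot a' = rot (fst z)"
      by (rule rot_reduce)
    obtain b' where b': "b' \<in> {0..2 * pi}" "rot b' = rot (snd z)"
      by (rule rot_reduce)
    have "rot_pair (a', b') = s" "(a', b') \<in> ?T"
      using z a' b' by (auto simp: rot_pair_def angle_group_def cbox_Pair_eq)
    then show "s \<in> rot_pair ` ?T" by blast
  qed
  then show "infinite ?T"
    using assms(2) finite_surj by blast
qed auto

lemma fixed_vector_excludes_rot_pi:
  assumes fixed: "\<forall>s\<in>S. AE z in lam. Tprime s \<phi> z = \<phi> z" and nz: "\<not> (AE z in lam. \<phi> z = 0)"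
  shows "(pi, 0) \<notin> angle_group S" "(0, pi) \<notin> angle_group S"
proof -
  have "s \<notin> S" if "\<And>z. Tprime s \<phi> z = - \<phi> z" for s
  proof
    assume "s \<in> S"
    with fixed have "AE z in lam. Tprime s \<phi> z = \<phi> z" ..
    then have "AE z in lam. \<phi> z = 0"
      by eventually_elim (simp add: that)
    with nz show False ..
  qed
  then show "(pi, 0) \<notin> angle_group S" "(0, pi) \<notin> angle_group S"
    using Tprime_rot_pi_0 Tprime_rot_0_pi by (auto simp: angle_group_def rot_pair_def)
qed

lemma H_subset_char_kernel:
  assumes "N \<ge> 1" "m * q + n * p = 0" "int N dvd n"
  shows "H N q p \<subseteq> rot_pair ` char_kernel m n"
proof
  fix s assume "s \<in> H N q p"
  then obtain \<theta> i where s: "s = rot_pair (of_int q * \<theta>, of_int p * \<theta> + 2 * pi * real i / real N)"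
    by (auto simp: H_def rot_pair_def)
  obtain j where n: "n = int N * j"
    using assms(3) by (elim dvdE)
  have "of_int m * (of_int q * \<theta>) + of_int n * (of_int p * \<theta>) = of_int (m * q + n * p) * \<theta>"
    by (simp add: algebra_simps)
  moreover have "of_int n * (2 * pi * real i / real N) = 2 * pi * of_int (j * int i)"
    using assms(1) by (simp add: n field_simps)
  ultimately have "of_int m * (of_int q * \<theta>) + of_int n * (of_int p * \<theta> + 2 * pi * real i / real N)
      = 2 * pi * of_int (j * int i)"
    using assms(2) by (simp add: distrib_left)
  then have "(of_int q * \<theta>, of_int p * \<theta> + 2 * pi * real i / real N) \<in> char_kernel m n"
    unfolding char_kernel_def mem_Collect_eq case_prod_conv by (rule exI)
  then show "s \<in> rot_pair ` char_kernel m n"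
    unfolding s by (rule imageI)
qed

lemma char_kernel_subset_H:
  assumes "q \<noteq> 0" "n \<noteq> 0" "m * q + n * p = 0" "\<bar>n\<bar> = int N"
  shows "rot_pair ` char_kernel m n \<subseteq> H N q p"
proof
  fix s assume "s \<in> rot_pair ` char_kernel m n"
  then obtain a b k where s: "s = rot_pair (a, b)" and k: "of_int m * a + of_int n * b = 2 * pi * of_int k"
    by (auto simp: char_kernel_def)
  have "N \<ge> 1"
    using assms(2,4) by auto
  define \<theta> where "\<theta> = a / of_int q"
  define i where "i = nat ((sgn n * k) mod int N)"
  define j where "j = (sgn n * k) div int N"
  have a: "a = of_int q * \<theta>"
    using assms(1) by (simp add: \<theta>_def)
  have "of_int n * (b - of_int p * \<theta>) = of_int m * a + of_int n * b - of_int (m * q + n * p) * \<theta>"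
    by (simp add: a algebra_simps)
  then have eq: "of_int n * (b - of_int p * \<theta>) = 2 * pi * of_int k"
    using k assms(3) by simp
  have "sgn n * n = int N"
    using assms(2,4) by (cases "n > 0") (auto simp: sgn_if)
  then have "real N * (b - of_int p * \<theta>) = of_int (sgn n * n) * (b - of_int p * \<theta>)"
    by (simp only: of_int_of_nat_eq)
  also have "\<dots> = of_int (sgn n) * (of_int n * (b - of_int p * \<theta>))"
    by (simp only: of_int_mult mult.assoc)
  also have "\<dots> = 2 * pi * of_int (sgn n * k)"
    by (simp add: eq)
  also have "sgn n * k = int i + j * int N"
    using \<open>N \<ge> 1\<close> by (simp add: i_def j_def)
  finally have "b - of_int p * \<theta> = 2 * pi * real i / real N + 2 * pi * of_int j"
    using \<open>N \<ge> 1\<close> by (simp add: field_simps)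
  then have "rot b = rot (of_int p * \<theta> + 2 * pi * real i / real N)"
    by (subst rot_eq_iff) (auto intro: exI[of _ j] simp: algebra_simps)
  moreover have "i < N"
    using \<open>N \<ge> 1\<close> by (simp add: i_def nat_less_iff)
  ultimately show "s \<in> H N q p"
    unfolding H_def s rot_pair_def a by auto
qed

lemma char_kernel_eq_H:
  assumes "odd m" "odd n"
  obtains N q p where "N \<ge> 1" "odd N" "odd q" "odd p" "coprime q p"
    "rot_pair ` char_kernel m n = H N q p"
proof -
  define g where "g = gcd m n"
  define p where "p = m div g"
  define q where "q = - (n div g)"
  have "n \<noteq> 0"
    using assms(2) by auto
  have m: "m = p * g" and n: "n = - q * g"
    by (simp_all add: p_def q_def g_def)
  have "odd q" "odd p"
    using assms by (simp_all add: m n)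
  moreover have "coprime q p"
    using div_gcd_coprime[of n m] assms(1) by (auto simp: p_def q_def g_def gcd.commute)
  moreover have "m * q + n * p = 0"
    by (simp add: m n)
  moreover have "q \<noteq> 0"
    using \<open>odd q\<close> by auto
  ultimately have "rot_pair ` char_kernel m n = H (nat \<bar>n\<bar>) q p"
    using \<open>n \<noteq> 0\<close> by (intro equalityI char_kernel_subset_H H_subset_char_kernel) auto
  moreover have "nat \<bar>n\<bar> \<ge> 1" "odd (nat \<bar>n\<bar>)"
    using assms(2) \<open>n \<noteq> 0\<close> by (auto simp: even_nat_iff)
  ultimately show ?thesis
    using \<open>odd q\<close> \<open>odd p\<close> \<open>coprime q p\<close> that by blast
qed

lemma eq_H_if_fixed_vector:
  assumes "closed_subgroup_SO2xSO2 S" "infinite S"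
    and "\<forall>s\<in>S. AE z in lam. Tprime s \<phi> z = \<phi> z" "\<not> (AE z in lam. \<phi> z = 0)"
  shows "\<exists>N q p. N \<ge> 1 \<and> odd N \<and> odd q \<and> odd p \<and> coprime q p \<and> S = H N q p"
proof -
  note no_pi = fixed_vector_excludes_rot_pi[OF assms(3,4)]
  then have "angle_group S \<noteq> UNIV" by auto
  then obtain m n where G: "angle_group S = char_kernel m n"
    using closed_plane_subgroup_eq_char_kernel[OF add_subgroup_angle_group[OF assms(1)]
        closed_angle_group[OF assms(1)] _ lattice_mem_angle_group[OF assms(1)]
        angle_group_small_elements[OF assms(1,2)]] by blast
  then have "odd m" "odd n"
    using no_pi by (simp_all add: pi_zero_mem_char_kernel_iff zero_pi_mem_char_kernel_iff)
  then obtain N q p where "N \<ge> 1" "odd N" "odd q" "odd p" "coprime q p" "rot_pair ` angle_group S = H N q p"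
    unfolding G by (rule char_kernel_eq_H)
  then show ?thesis
    using image_angle_group[OF assms(1)] by metis
qed

lemma fixed_vector_of_H:
  assumes "N \<ge> 1" "odd N" "odd q" "odd p"
  shows "\<exists>\<phi>. L2 \<phi> \<and> \<not> (AE z in lam. \<phi> z = 0) \<and> (\<forall>s\<in>H N q p. AE z in lam. Tprime s \<phi> z = \<phi> z)"
proof -
  define m where "m = int N * p"
  define n where "n = - (int N * q)"
  have odd: "odd m" "odd n"
    using assms by (simp_all add: m_def n_def)
  have "H N q p \<subseteq> rot_pair ` char_kernel m n"
    using assms(1) by (intro H_subset_char_kernel) (simp_all add: m_def n_def)
  then have "\<forall>s\<in>H N q p. AE z in lam. Tprime s (char_fun m n) z = char_fun m n z"
    using char_fun_fixed[OF odd] by (force simp: rot_pair_def)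
  then show ?thesis
    using L2_char_fun char_fun_not_AE_zero[OF odd] by blast
qed

theorem mainTheorem6:
  fixes S :: "((real^2^2) \<times> (real^2^2)) set"
  assumes "closed_subgroup_SO2xSO2 S" and "infinite S"
  shows "(\<exists>\<phi>. L2 \<phi> \<and> \<not> (AE z in lam. \<phi> z = 0) \<and>
            (\<forall>s\<in>S. AE z in lam. Tprime s \<phi> z = \<phi> z))
     \<longleftrightarrow> (\<exists>(N::nat) (q::int) (p::int). N \<ge> 1 \<and> odd N \<and> odd q \<and> odd p \<and>
            coprime q p \<and> S = H N q p)"
  using eq_H_if_fixed_vector[OF assms] fixed_vector_of_H by blast

end
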